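(* Let $n\ge2$ and $\epsilon>0$. For every $\epsilon$-optimal vector strategy $\{u_r\},\{v_j\}$ for the game $\mathrm{CHSH}(n)$, the vectors $v_1,\dots,v_n$ span a real subspace of dimension at least $n-8\sqrt2\,n(n-1)\epsilon$; in particular the strategy lives in a space of at least that dimension.
   Context: $\mathrm{CHSH}(n)$ is the $n(n-1)\times n$ XOR game whose columns are indexed by $\{1,\dots,n\}$ and which has, for each pair $1\le i<j\le n$, the two rows $(e_i-e_j)/(2n(n-1))$ and $(e_i+e_j)/(2n(n-1))$ ($e_i$ the standard basis row vectors). Its quantum success bias is $1/\sqrt2$. A vector strategy for an $m\times n$ game with cost matrix $G$ is a pair of families of unit vectors $u_1,\dots,u_m$, $v_1,\dots,v_n$ in some $\mathbb{R}^N$, with bias $\sum G_{rj}u_r\cdot v_j$; it is $\epsilon$-optimal if its bias is at least $\varepsilon_q(G)-\epsilon$, where $\varepsilon_q(G)$ is the maximum bias over vector strategies. *)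

theory Defs
  imports "HOL-Analysis.Analysis"
begin

definition xor_bias :: "('r \<Rightarrow> 'c \<Rightarrow> real) \<Rightarrow> 'r set \<Rightarrow> 'c set
    \<Rightarrow> ('r \<Rightarrow> 'a::real_inner) \<Rightarrow> ('c \<Rightarrow> 'a) \<Rightarrow> real" where
  "xor_bias G R C u v = (\<Sum>r\<in>R. \<Sum>j\<in>C. G r j * (u r \<bullet> v j))"

definition is_vector_strategy :: "'r set \<Rightarrow> 'c set
    \<Rightarrow> ('r \<Rightarrow> 'a::real_normed_vector) \<Rightarrow> ('c \<Rightarrow> 'a) \<Rightarrow> bool" where
  "is_vector_strategy R C u v \<longleftrightarrow> (\<forall>r\<in>R. norm (u r) = 1) \<and> (\<forall>j\<in>C. norm (v j) = 1)"

text \<open>Vectors of R^N in coordinates: functions nat => real, only coordinates k < N matter.\<close>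
definition coord_inner :: "nat \<Rightarrow> (nat \<Rightarrow> real) \<Rightarrow> (nat \<Rightarrow> real) \<Rightarrow> real" where
  "coord_inner N x y = (\<Sum>k<N. x k * y k)"

definition coord_bias :: "nat \<Rightarrow> ('r \<Rightarrow> 'c \<Rightarrow> real) \<Rightarrow> 'r set \<Rightarrow> 'c set
    \<Rightarrow> ('r \<Rightarrow> nat \<Rightarrow> real) \<Rightarrow> ('c \<Rightarrow> nat \<Rightarrow> real) \<Rightarrow> real" where
  "coord_bias N G R C u v = (\<Sum>r\<in>R. \<Sum>j\<in>C. G r j * coord_inner N (u r) (v j))"

definition coord_strategy :: "nat \<Rightarrow> 'r set \<Rightarrow> 'c set
    \<Rightarrow> ('r \<Rightarrow> nat \<Rightarrow> real) \<Rightarrow> ('c \<Rightarrow> nat \<Rightarrow> real) \<Rightarrow> bool" where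
  "coord_strategy N R C u v \<longleftrightarrow>
     (\<forall>r\<in>R. coord_inner N (u r) (u r) = 1) \<and> (\<forall>j\<in>C. coord_inner N (v j) (v j) = 1)"

definition quantum_bias :: "('r \<Rightarrow> 'c \<Rightarrow> real) \<Rightarrow> 'r set \<Rightarrow> 'c set \<Rightarrow> real" where
  "quantum_bias G R C =
     Sup {coord_bias N G R C u v | N u v. coord_strategy N R C u v}"

text \<open>CHSH(n): columns 1..n; for each 1 <= i < j <= n two rows (i,j,False) = (e_i - e_j)/(2n(n-1))
  and (i,j,True) = (e_i + e_j)/(2n(n-1)).\<close>
definition chsh_rows :: "nat \<Rightarrow> (nat \<times> nat \<times> bool) set" where
  "chsh_rows n = {(i, j, s). 1 \<le> i \<and> i < j \<and> j \<le> n}"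

definition chsh_cols :: "nat \<Rightarrow> nat set" where
  "chsh_cols n = {1..n}"

definition chsh_G :: "nat \<Rightarrow> nat \<times> nat \<times> bool \<Rightarrow> nat \<Rightarrow> real" where
  "chsh_G n = (\<lambda>(i, j, s) k.
     ((if k = i then 1 else 0) + (if s then 1 else -1) * (if k = j then 1 else 0))
       / (2 * real n * (real n - 1)))"

end

theory Submission
  imports Defs
begin

(* Write K = 2n(n-1) and, for columns i < j, f(i,j) = |v_i - v_j| + |v_i + v_j|.
   - Upper bound: the rows (i, j, -) and (i, j, +) together contribute at most f(i,j)/K to
     the bias (Cauchy-Schwarz), and f(i,j) <= 2 sqrt 2.
   - Lower bound: the strategy v_k = e_k, u_(i,j,+-) = (e_i +- e_j)/sqrt 2 attains 2 sqrt 2/K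
     on every pair, so the quantum bias is at least the sum of these.
   - So an eps-optimal strategy has total defect sum_(i<j) (2 sqrt 2 - f(i,j)) <= K eps.  For
     unit vectors (v_i . v_j)^2 <= 2 sqrt 2 (2 sqrt 2 - f(i,j)), hence the Gram matrix M of the
     v_j has off-diagonal mass at most T = 8 sqrt 2 n(n-1) eps.
   - Finally (tr M)^2 <= rank M * |M|_F^2 gives n^2 <= d (n + T), i.e. d >= n - T for the
     dimension d of the span. *)

(* For unit vectors a, b the quantity |a - b| + |a + b| is at most 2 sqrt 2, with equality
   exactly when a and b are orthogonal; quantitatively, the defect controls (a . b)^2. *)
lemma unit_pair_defect:
  fixes a b :: "'a::real_inner"
  assumes "norm a = 1" "norm b = 1"
  shows "(a \<bullet> b)\<^sup>2 \<le> 2 * sqrt 2 * (2 * sqrt 2 - (norm (a - b) + norm (a + b)))"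
proof -
  define c where "c = a \<bullet> b"
  define x where "x = norm (a - b)"
  define y where "y = norm (a + b)"
  define f where "f = x + y"
  have unit: "a \<bullet> a = 1" "b \<bullet> b = 1" using assms by (simp_all add: dot_square_norm)
  have x2: "x\<^sup>2 = 2 - 2 * c" unfolding x_def c_def
    by (simp add: power2_norm_eq_inner inner_diff_left inner_diff_right unit inner_commute)
  have y2: "y\<^sup>2 = 2 + 2 * c" unfolding y_def c_def
    by (simp add: power2_norm_eq_inner inner_add_left inner_add_right unit inner_commute)
  have "(x * y)\<^sup>2 = 4 - 4 * c\<^sup>2"
    unfolding power_mult_distrib x2 y2 by (simp add: algebra_simps power2_eq_square)
  also have "\<dots> = (2 - c\<^sup>2)\<^sup>2 - (c\<^sup>2)\<^sup>2" by (simp add: power2_eq_square algebra_simps)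
  also have "\<dots> \<le> (2 - c\<^sup>2)\<^sup>2" by simp
  finally have sq: "(x * y)\<^sup>2 \<le> (2 - c\<^sup>2)\<^sup>2" .
  have "c\<^sup>2 \<le> 1"
  proof -
    have "0 \<le> x\<^sup>2" "0 \<le> y\<^sup>2" by simp_all
    then have "\<bar>c\<bar> \<le> 1" unfolding abs_le_iff using x2 y2 by (intro conjI) linarith+
    then show ?thesis by (simp add: abs_square_le_1)
  qed
  then have xy: "x * y \<le> 2 - c\<^sup>2"
    by (intro power2_le_imp_le[OF sq]) simp
  have "f\<^sup>2 = 4 + 2 * x * y" unfolding f_def power2_sum using x2 y2 by simp
  with xy have c2: "2 * c\<^sup>2 \<le> 8 - f\<^sup>2" by linarith
  have "f\<^sup>2 \<le> 8" using c2 zero_le_power2[of c] by linarith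
  then have "f\<^sup>2 \<le> (2 * sqrt 2)\<^sup>2" by (simp add: power_mult_distrib)
  then have f_le: "f \<le> 2 * sqrt 2"
    by (rule power2_le_imp_le) simp
  have "8 - f\<^sup>2 = (2 * sqrt 2 - f) * (2 * sqrt 2 + f)"
    by (simp add: algebra_simps power2_eq_square)
  also have "\<dots> \<le> (2 * sqrt 2 - f) * (4 * sqrt 2)"
    using f_le by (intro mult_left_mono) (simp_all add: f_def x_def y_def)
  also have "\<dots> = 2 * (2 * sqrt 2 * (2 * sqrt 2 - f))"
    by (simp add: algebra_simps)
  finally have "c\<^sup>2 \<le> 2 * sqrt 2 * (2 * sqrt 2 - f)"
    using c2 by linarith
  then show ?thesis by (simp only: c_def f_def x_def y_def)
qed

lemma inner_orthonormal_expansion: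
  fixes B :: "'a::euclidean_space set"
  assumes orth: "pairwise orthogonal B" and unit: "\<And>b. b \<in> B \<Longrightarrow> norm b = 1"
    and fin: "finite B" and x: "x \<in> span B"
  shows "x \<bullet> y = (\<Sum>b\<in>B. (x \<bullet> b) * (y \<bullet> b))"
proof -
  have "x \<bullet> y = (\<Sum>b\<in>B. (x \<bullet> b) *\<^sub>R b) \<bullet> y"
    using orthonormal_basis_expand[OF orth unit x fin] by simp
  also have "\<dots> = (\<Sum>b\<in>B. (x \<bullet> b) * (y \<bullet> b))"
    unfolding inner_sum_left inner_scaleR_left by (simp add: inner_commute)
  finally show ?thesis .
qed

(* The squared Frobenius norm of a Gram matrix, computed in an orthonormal basis of the span:
   it equals that of the d x d matrix of the frame operator sum_i v_i v_i^T. *)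
lemma gram_frobenius_in_orthonormal_basis:
  fixes v :: "'i \<Rightarrow> 'a::euclidean_space"
  assumes orth: "pairwise orthogonal B" and unit: "\<And>b. b \<in> B \<Longrightarrow> norm b = 1"
    and fin: "finite B" and span: "\<And>i. i \<in> C \<Longrightarrow> v i \<in> span B"
  shows "(\<Sum>b\<in>B. \<Sum>b'\<in>B. (\<Sum>i\<in>C. (v i \<bullet> b) * (v i \<bullet> b'))\<^sup>2)
       = (\<Sum>i\<in>C. \<Sum>j\<in>C. (v i \<bullet> v j)\<^sup>2)"
proof -
  have ip: "v i \<bullet> v j = (\<Sum>b\<in>B. (v i \<bullet> b) * (v j \<bullet> b))" if "i \<in> C" for i j
    using inner_orthonormal_expansion[OF orth unit fin span[OF that]] .
  have "(\<Sum>b\<in>B. \<Sum>b'\<in>B. (\<Sum>i\<in>C. (v i \<bullet> b) * (v i \<bullet> b'))\<^sup>2)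
      = (\<Sum>b\<in>B. \<Sum>b'\<in>B. \<Sum>i\<in>C. \<Sum>j\<in>C.
          ((v i \<bullet> b) * (v j \<bullet> b)) * ((v i \<bullet> b') * (v j \<bullet> b')))"
    unfolding power2_eq_square sum_product by (simp add: algebra_simps)
  also have "\<dots> = (\<Sum>i\<in>C. \<Sum>j\<in>C. \<Sum>b\<in>B. \<Sum>b'\<in>B.
          ((v i \<bullet> b) * (v j \<bullet> b)) * ((v i \<bullet> b') * (v j \<bullet> b')))"
    by (subst sum.swap, subst (2) sum.swap, subst sum.swap, simp add: sum.swap[of _ B C])
  also have "\<dots> = (\<Sum>i\<in>C. \<Sum>j\<in>C. (v i \<bullet> v j)\<^sup>2)"
    by (intro sum.cong refl) (simp add: ip power2_eq_square sum_product)
  finally show ?thesis .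
qed

(* Trace/rank inequality for the Gram matrix M of unit vectors: (tr M)^2 <= rank M * |M|_F^2,
   where tr M = card C and rank M = dim (v ` C).  Cauchy-Schwarz on the diagonal of the
   frame operator in an orthonormal basis of the span. *)
lemma gram_trace_rank_inequality:
  fixes v :: "'i \<Rightarrow> 'a::euclidean_space"
  assumes C: "finite C" and unit: "\<And>i. i \<in> C \<Longrightarrow> norm (v i) = 1"
  shows "real (card C) ^ 2 \<le> real (dim (v ` C)) * (\<Sum>i\<in>C. \<Sum>j\<in>C. (v i \<bullet> v j)\<^sup>2)"
proof -
  obtain B where "B \<subseteq> span (v ` C)" and orth: "pairwise orthogonal B"
    and B1: "\<And>x. x \<in> B \<Longrightarrow> norm x = 1" and ind: "independent B"
    and cB: "card B = dim (span (v ` C))" and sB: "span B = span (v ` C)"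
    by (metis orthonormal_basis_subspace subspace_span)
  have fB: "finite B" using ind independent_imp_finite by blast
  have vB: "v i \<in> span B" if "i \<in> C" for i
    using sB that by (simp add: span_base)
  define T where "T b b' = (\<Sum>i\<in>C. (v i \<bullet> b) * (v i \<bullet> b'))" for b b'
  have "real (card C) = (\<Sum>i\<in>C. v i \<bullet> v i)"
    using unit by (simp add: dot_square_norm)
  also have "\<dots> = (\<Sum>i\<in>C. \<Sum>b\<in>B. (v i \<bullet> b) * (v i \<bullet> b))"
    using inner_orthonormal_expansion[OF orth B1 fB vB] by simp
  also have "\<dots> = (\<Sum>b\<in>B. T b b)" unfolding T_def by (rule sum.swap)
  finally have trace: "real (card C) ^ 2 \<le> (\<Sum>b\<in>B. (T b b)\<^sup>2) * card B"
    by (simp add: sum_squared_le_sum_of_squares)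
  have "(\<Sum>b\<in>B. (T b b)\<^sup>2) \<le> (\<Sum>b\<in>B. \<Sum>b'\<in>B. (T b b')\<^sup>2)"
    by (intro sum_mono member_le_sum[where f="\<lambda>b'. (T _ b')\<^sup>2"]) (auto simp: fB)
  also have "\<dots> = (\<Sum>i\<in>C. \<Sum>j\<in>C. (v i \<bullet> v j)\<^sup>2)"
    unfolding T_def by (rule gram_frobenius_in_orthonormal_basis[OF orth B1 fB vB])
  finally have "(\<Sum>b\<in>B. (T b b)\<^sup>2) * card B \<le> (\<Sum>i\<in>C. \<Sum>j\<in>C. (v i \<bullet> v j)\<^sup>2) * card B"
    by (rule mult_right_mono) simp
  with trace cB show ?thesis
    by (simp add: mult.commute)
qed

lemma dim_lower_bound_from_gram:
  fixes v :: "'i \<Rightarrow> 'a::euclidean_space"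
  assumes C: "finite C" and unit: "\<And>i. i \<in> C \<Longrightarrow> norm (v i) = 1"
    and gram: "(\<Sum>i\<in>C. \<Sum>j\<in>C. (v i \<bullet> v j)\<^sup>2) \<le> real (card C) + T" and T: "T \<ge> 0"
  shows "real (card C) - T \<le> real (dim (v ` C))"
proof (rule ccontr)
  define c d where "c = real (card C)" and "d = real (dim (v ` C))"
  assume "\<not> c - T \<le> d"
  moreover have "0 \<le> d" by (simp add: d_def)
  ultimately have "d * (c + T) < (c - T) * (c + T)"
    using T by (intro mult_strict_right_mono) auto
  also have "\<dots> \<le> c\<^sup>2" by (simp add: power2_eq_square algebra_simps)
  also have "c\<^sup>2 \<le> d * (c + T)"
    using order_trans[OF gram_trace_rank_inequality[OF C unit] mult_left_mono[OF gram]]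
    unfolding c_def d_def by simp
  finally show False by simp
qed

lemma sum_square_symmetric:
  fixes g :: "'i::linorder \<Rightarrow> 'i \<Rightarrow> 'b::comm_semiring_1"
  assumes A: "finite A" and sym: "\<And>i j. g i j = g j i"
  shows "(\<Sum>i\<in>A. \<Sum>j\<in>A. g i j)
       = (\<Sum>i\<in>A. g i i) + 2 * (\<Sum>i\<in>A. \<Sum>j\<in>{j\<in>A. i < j}. g i j)"
proof -
  have row: "(\<Sum>j\<in>A. g i j)
      = (\<Sum>j\<in>{j\<in>A. j < i}. g i j) + (if i \<in> A then g i i else 0) + (\<Sum>j\<in>{j\<in>A. i < j}. g i j)"
    for i
  proof -
    have "(\<Sum>j\<in>A. g i j) = (\<Sum>j\<in>A. (if j < i then g i j else 0)
        + (if i = j then g i j else 0) + (if i < j then g i j else 0))"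
      by (intro sum.cong) auto
    then show ?thesis using A by (simp add: sum.distrib sum.inter_filter)
  qed
  have lower: "(\<Sum>i\<in>A. \<Sum>j\<in>{j\<in>A. j < i}. g i j) = (\<Sum>i\<in>A. \<Sum>j\<in>{j\<in>A. i < j}. g i j)"
    using sum.swap_restrict[OF A A, of g "\<lambda>i j. j < i"] A by (simp add: sym)
  show ?thesis
    by (simp add: row sum.distrib lower mult_2 add.assoc add.left_commute)
qed

lemma coord_inner_abs_le_1:
  assumes "coord_inner N x x = 1" "coord_inner N y y = 1"
  shows "\<bar>coord_inner N x y\<bar> \<le> 1"
proof -
  have "\<bar>x k * y k\<bar> \<le> (x k * x k + y k * y k) / 2" for k
    by (metis abs_mult_self_eq arith_geo_mean mult.assoc mult.left_commute
        power2_eq_square zero_le_square)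
  then have "(\<Sum>k<N. \<bar>x k * y k\<bar>) \<le> (\<Sum>k<N. (x k * x k + y k * y k) / 2)"
    by (rule sum_mono)
  then have "\<bar>coord_inner N x y\<bar> \<le> (\<Sum>k<N. (x k * x k + y k * y k) / 2)"
    unfolding coord_inner_def by (rule order_trans[OF sum_abs])
  also have "\<dots> = 1"
    using assms by (simp add: coord_inner_def sum_divide_distrib[symmetric] sum.distrib)
  finally show ?thesis .
qed

(* Every coordinate strategy's bias is a lower bound for the quantum bias; in particular the
   supremum defining quantum_bias is taken over a set bounded by sum |G r j|. *)
lemma coord_bias_le_quantum_bias:
  assumes "coord_strategy N R C u v"
  shows "coord_bias N G R C u v \<le> quantum_bias G R C"
  unfolding quantum_bias_def
proof (rule cSup_upper)
  show "coord_bias N G R C u v \<in> {coord_bias N G R C u v |N u v. coord_strategy N R C u v}"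
    using assms by blast
  have "coord_bias N' G R C u' v' \<le> (\<Sum>r\<in>R. \<Sum>j\<in>C. \<bar>G r j\<bar>)"
    if st: "coord_strategy N' R C u' v'" for N' u' v'
    unfolding coord_bias_def
  proof (intro sum_mono)
    fix r j assume "r \<in> R" "j \<in> C"
    then have "\<bar>coord_inner N' (u' r) (v' j)\<bar> \<le> 1"
      using st by (intro coord_inner_abs_le_1) (auto simp: coord_strategy_def)
    then have "\<bar>G r j * coord_inner N' (u' r) (v' j)\<bar> \<le> \<bar>G r j\<bar>"
      by (simp add: abs_mult mult_left_le)
    then show "G r j * coord_inner N' (u' r) (v' j) \<le> \<bar>G r j\<bar>" by linarith
  qed
  then show "bdd_above {coord_bias N G R C u v |N u v. coord_strategy N R C u v}"
    by (intro bdd_aboveI) blast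
qed

(* The common denominator 2n(n-1) of the entries of CHSH(n). *)
definition chsh_scale :: "nat \<Rightarrow> real" where
  "chsh_scale n = 2 * real n * (real n - 1)"

lemma chsh_scale_nonneg: "0 \<le> chsh_scale n"
  by (cases n) (simp_all add: chsh_scale_def)

lemma chsh_sum_rows:
  "(\<Sum>r\<in>chsh_rows n. h r) = (\<Sum>i\<in>{1..n}. \<Sum>j\<in>{i<..n}. h (i, j, False) + h (i, j, True))"
proof -
  have rows: "chsh_rows n = Sigma {1..n} (\<lambda>i. Sigma {i<..n} (\<lambda>j. UNIV))"
    by (auto simp: chsh_rows_def)
  have "(\<Sum>r\<in>chsh_rows n. h r) = (\<Sum>i\<in>{1..n}. \<Sum>p\<in>Sigma {i<..n} (\<lambda>j. UNIV). h (i, p))"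
    unfolding rows by (subst sum.Sigma) auto
  also have "\<dots> = (\<Sum>i\<in>{1..n}. \<Sum>j\<in>{i<..n}. \<Sum>s\<in>UNIV. h (i, j, s))"
    by (intro sum.cong refl, subst sum.Sigma) auto
  finally show ?thesis by (simp add: UNIV_bool)
qed

lemma chsh_row_value:
  assumes "i \<in> {1..n}" "j \<in> {1..n}" "i \<noteq> j"
  shows "(\<Sum>k\<in>{1..n}. chsh_G n (i, j, s) k * g k)
       = (g i + (if s then 1 else -1) * g j) / chsh_scale n"
  using assms
  by (simp add: chsh_G_def chsh_scale_def ring_distribs sum.distrib
      sum_divide_distrib[symmetric] if_distrib[of "\<lambda>x. x * _"] sum_negf cong: if_cong)

(* Upper bound on the bias: by Cauchy-Schwarz, Alice's best answers to the rows (i, j, -+)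
   give |v_i - v_j| and |v_i + v_j|, so each pair contributes at most f(i,j)/2n(n-1). *)
lemma chsh_xor_bias_le:
  fixes u :: "nat \<times> nat \<times> bool \<Rightarrow> 'a::real_inner" and v :: "nat \<Rightarrow> 'a"
  assumes "is_vector_strategy (chsh_rows n) (chsh_cols n) u v"
  shows "xor_bias (chsh_G n) (chsh_rows n) (chsh_cols n) u v
       \<le> (\<Sum>i\<in>{1..n}. \<Sum>j\<in>{i<..n}. (norm (v i - v j) + norm (v i + v j)) / chsh_scale n)"
proof -
  have row: "(\<Sum>k\<in>{1..n}. chsh_G n (i, j, s) k * (u (i, j, s) \<bullet> v k))
      \<le> norm (v i + (if s then 1 else -1) *\<^sub>R v j) / chsh_scale n"
    if ij: "i \<in> {1..n}" "j \<in> {i<..n}" for i j s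
  proof -
    have "norm (u (i, j, s)) = 1"
      using assms ij by (auto simp: is_vector_strategy_def chsh_rows_def)
    then have "u (i, j, s) \<bullet> (v i + (if s then 1 else -1) *\<^sub>R v j)
        \<le> norm (v i + (if s then 1 else -1) *\<^sub>R v j)"
      using norm_cauchy_schwarz by (metis mult_1)
    then show ?thesis
      using chsh_row_value[of i n j s "\<lambda>k. u (i, j, s) \<bullet> v k"] ij chsh_scale_nonneg
      by (auto simp: inner_add_right intro: divide_right_mono)
  qed
  show ?thesis
    unfolding xor_bias_def chsh_cols_def chsh_sum_rows add_divide_distrib
    by (intro sum_mono add_mono) (use row[of _ _ False] row[of _ _ True] in auto)
qed

(* The optimal strategy for CHSH(n) in coordinates of R^(n+1): column k gets the basis
   vector e_k, row (i, j, s) gets (e_i +- e_j) / sqrt 2. *)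
definition chsh_opt_v :: "nat \<Rightarrow> nat \<Rightarrow> real" where
  "chsh_opt_v k = (\<lambda>m. if m = k then 1 else 0)"

definition chsh_opt_u :: "nat \<times> nat \<times> bool \<Rightarrow> nat \<Rightarrow> real" where
  "chsh_opt_u = (\<lambda>(i, j, s) m.
     if m = i then 1 / sqrt 2 else if m = j then (if s then 1 else -1) / sqrt 2 else 0)"

lemma coord_inner_chsh_opt_v: "k < N \<Longrightarrow> coord_inner N x (chsh_opt_v k) = x k"
  by (simp add: coord_inner_def chsh_opt_v_def if_distrib[of "\<lambda>y. _ * y"] cong: if_cong)

lemma chsh_opt_strategy:
  "coord_strategy (Suc n) (chsh_rows n) (chsh_cols n) chsh_opt_u chsh_opt_v"
  unfolding coord_strategy_def
proof (intro conjI ballI)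
  fix r assume "r \<in> chsh_rows n"
  then obtain i j s where r: "r = (i, j, s)" "1 \<le> i" "i < j" "j \<le> n"
    by (auto simp: chsh_rows_def)
  have "chsh_opt_u r m * chsh_opt_u r m = (if m = i then 1/2 else 0) + (if m = j then 1/2 else 0)"
    for m using r by (auto simp: chsh_opt_u_def)
  then show "coord_inner (Suc n) (chsh_opt_u r) (chsh_opt_u r) = 1"
    using r by (simp add: coord_inner_def sum.distrib)
next
  fix k assume "k \<in> chsh_cols n"
  then show "coord_inner (Suc n) (chsh_opt_v k) (chsh_opt_v k) = 1"
    by (simp add: coord_inner_chsh_opt_v chsh_cols_def) (simp add: chsh_opt_v_def)
qed

lemma chsh_opt_bias:
  "coord_bias (Suc n) (chsh_G n) (chsh_rows n) (chsh_cols n) chsh_opt_u chsh_opt_v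
     = (\<Sum>i\<in>{1..n}. \<Sum>j\<in>{i<..n}. 2 * sqrt 2 / chsh_scale n)"
proof -
  have row: "(\<Sum>k\<in>{1..n}. chsh_G n (i, j, s) k * coord_inner (Suc n) (chsh_opt_u (i, j, s)) (chsh_opt_v k))
      = sqrt 2 / chsh_scale n" if ij: "i \<in> {1..n}" "j \<in> {i<..n}" for i j s
  proof -
    have "(\<Sum>k\<in>{1..n}. chsh_G n (i, j, s) k * coord_inner (Suc n) (chsh_opt_u (i, j, s)) (chsh_opt_v k))
        = (\<Sum>k\<in>{1..n}. chsh_G n (i, j, s) k * chsh_opt_u (i, j, s) k)"
      by (intro sum.cong refl) (simp add: coord_inner_chsh_opt_v)
    also have "\<dots> = (1 / sqrt 2 + 1 / sqrt 2) / chsh_scale n"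
      using chsh_row_value[of i n j s "chsh_opt_u (i, j, s)"] ij by (auto simp: chsh_opt_u_def)
    also have "1 / sqrt 2 + 1 / sqrt 2 = sqrt (2::real)"
      by (simp add: field_simps)
    finally show ?thesis .
  qed
  show ?thesis
    unfolding coord_bias_def chsh_cols_def chsh_sum_rows
  proof (intro sum.cong refl)
    fix i j assume ij: "i \<in> {1..n}" "j \<in> {i<..n}"
    show "(\<Sum>k\<in>{1..n}. chsh_G n (i, j, False) k
          * coord_inner (Suc n) (chsh_opt_u (i, j, False)) (chsh_opt_v k))
        + (\<Sum>k\<in>{1..n}. chsh_G n (i, j, True) k
          * coord_inner (Suc n) (chsh_opt_u (i, j, True)) (chsh_opt_v k))
        = 2 * sqrt 2 / chsh_scale n"
      unfolding row[OF ij] by (simp add: add_divide_distrib[symmetric])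
  qed
qed

lemma chsh_quantum_bias_ge:
  "(\<Sum>i\<in>{1..n}. \<Sum>j\<in>{i<..n}. 2 * sqrt 2 / chsh_scale n)
     \<le> quantum_bias (chsh_G n) (chsh_rows n) (chsh_cols n)"
  using coord_bias_le_quantum_bias[OF chsh_opt_strategy] chsh_opt_bias by metis

(* For an eps-optimal strategy the total defect of the column vectors, summed over pairs
   i < j, is at most 2n(n-1) eps: compare the upper and lower bounds on the bias. *)
lemma chsh_near_optimal_pair_defect:
  fixes u :: "nat \<times> nat \<times> bool \<Rightarrow> 'a::real_inner" and v :: "nat \<Rightarrow> 'a"
  assumes n: "n \<ge> 2" and strat: "is_vector_strategy (chsh_rows n) (chsh_cols n) u v"
    and opt: "xor_bias (chsh_G n) (chsh_rows n) (chsh_cols n) u v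
           \<ge> quantum_bias (chsh_G n) (chsh_rows n) (chsh_cols n) - \<epsilon>"
  shows "(\<Sum>i\<in>{1..n}. \<Sum>j\<in>{i<..n}. 2 * sqrt 2 - (norm (v i - v j) + norm (v i + v j)))
       \<le> chsh_scale n * \<epsilon>"
proof -
  define f where "f i j = norm (v i - v j) + norm (v i + v j)" for i j
  have "(\<Sum>i\<in>{1..n}. \<Sum>j\<in>{i<..n}. 2 * sqrt 2 / chsh_scale n) - \<epsilon>
      \<le> (\<Sum>i\<in>{1..n}. \<Sum>j\<in>{i<..n}. f i j / chsh_scale n)"
    using chsh_quantum_bias_ge[of n] chsh_xor_bias_le[OF strat] opt unfolding f_def by linarith
  then have "(\<Sum>i\<in>{1..n}. \<Sum>j\<in>{i<..n}. 2 * sqrt 2 - f i j) / chsh_scale n \<le> \<epsilon>"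
    by (simp add: sum_divide_distrib[symmetric] diff_divide_distrib sum_subtractf)
  moreover have "chsh_scale n > 0" using n by (simp add: chsh_scale_def)
  ultimately show ?thesis unfolding f_def by (simp add: divide_le_eq mult.commute)
qed

lemma chsh_near_optimal_gram:
  fixes u :: "nat \<times> nat \<times> bool \<Rightarrow> 'a::real_inner" and v :: "nat \<Rightarrow> 'a"
  assumes n: "n \<ge> 2" and strat: "is_vector_strategy (chsh_rows n) (chsh_cols n) u v"
    and opt: "xor_bias (chsh_G n) (chsh_rows n) (chsh_cols n) u v
           \<ge> quantum_bias (chsh_G n) (chsh_rows n) (chsh_cols n) - \<epsilon>"
  shows "(\<Sum>i\<in>{1..n}. \<Sum>j\<in>{1..n}. (v i \<bullet> v j)\<^sup>2)
       \<le> real n + 8 * sqrt 2 * real n * (real n - 1) * \<epsilon>"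
proof -
  have unit: "norm (v k) = 1" if "k \<in> {1..n}" for k
    using strat that by (simp add: is_vector_strategy_def chsh_cols_def)
  have "(\<Sum>i\<in>{1..n}. \<Sum>j\<in>{i<..n}. (v i \<bullet> v j)\<^sup>2)
      \<le> (\<Sum>i\<in>{1..n}. \<Sum>j\<in>{i<..n}. 2 * sqrt 2 * (2 * sqrt 2 - (norm (v i - v j) + norm (v i + v j))))"
    by (intro sum_mono unit_pair_defect unit) auto
  also have "\<dots> \<le> 2 * sqrt 2 * (chsh_scale n * \<epsilon>)"
    using chsh_near_optimal_pair_defect[OF n strat opt]
    by (simp add: sum_distrib_left[symmetric])
  finally have pairs: "(\<Sum>i\<in>{1..n}. \<Sum>j\<in>{i<..n}. (v i \<bullet> v j)\<^sup>2) \<le> 2 * sqrt 2 * (chsh_scale n * \<epsilon>)" .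
  have upper: "{j \<in> {1..n}. i < j} = {i<..n}" if "i \<in> {1..n}" for i
    using that by auto
  have "(\<Sum>i\<in>{1..n}. \<Sum>j\<in>{1..n}. (v i \<bullet> v j)\<^sup>2)
      = (\<Sum>i\<in>{1..n}. (v i \<bullet> v i)\<^sup>2)
        + 2 * (\<Sum>i\<in>{1..n}. \<Sum>j\<in>{j \<in> {1..n}. i < j}. (v i \<bullet> v j)\<^sup>2)"
    by (rule sum_square_symmetric) (simp_all add: inner_commute)
  also have "(\<Sum>i\<in>{1..n}. \<Sum>j\<in>{j \<in> {1..n}. i < j}. (v i \<bullet> v j)\<^sup>2)
      = (\<Sum>i\<in>{1..n}. \<Sum>j\<in>{i<..n}. (v i \<bullet> v j)\<^sup>2)"
    by (rule sum.cong[OF refl], rule sum.cong[OF upper refl])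
  also have "(\<Sum>i\<in>{1..n}. (v i \<bullet> v i)\<^sup>2) = real n"
    using unit by (simp add: dot_square_norm)
  moreover have "2 * (2 * sqrt 2 * (chsh_scale n * \<epsilon>)) = 8 * sqrt 2 * real n * (real n - 1) * \<epsilon>"
    by (simp add: chsh_scale_def algebra_simps)
  ultimately show ?thesis
    using pairs by linarith
qed

theorem proposition7p2:
  fixes n :: nat and \<epsilon> :: real
    and u :: "nat \<times> nat \<times> bool \<Rightarrow> 'a::euclidean_space" and v :: "nat \<Rightarrow> 'a"
  assumes "n \<ge> 2" and "\<epsilon> > 0"
    and "is_vector_strategy (chsh_rows n) (chsh_cols n) u v"
    and "xor_bias (chsh_G n) (chsh_rows n) (chsh_cols n) u v
           \<ge> quantum_bias (chsh_G n) (chsh_rows n) (chsh_cols n) - \<epsilon>"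
  shows "real (dim (v ` chsh_cols n)) \<ge> real n - 8 * sqrt 2 * real n * (real n - 1) * \<epsilon>
       \<and> real DIM('a) \<ge> real n - 8 * sqrt 2 * real n * (real n - 1) * \<epsilon>"
proof -
  let ?T = "8 * sqrt 2 * real n * (real n - 1) * \<epsilon>"
  have cols: "chsh_cols n = {1..n}" by (simp add: chsh_cols_def)
  have unit: "norm (v k) = 1" if "k \<in> chsh_cols n" for k
    using assms(3) that by (simp add: is_vector_strategy_def)
  have "?T \<ge> 0" using assms(1,2) by simp
  then have "real (card (chsh_cols n)) - ?T \<le> real (dim (v ` chsh_cols n))"
    using dim_lower_bound_from_gram[of "chsh_cols n" v ?T] unit
      chsh_near_optimal_gram[OF assms(1,3,4)] by (simp add: cols)
  moreover have "dim (v ` chsh_cols n) \<le> DIM('a)" by (rule dim_subset_UNIV)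
  ultimately show ?thesis by (simp add: cols)
qed

end
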